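(* Consider smoothed X3C-$k$ or smoothed SC-$k$ on a collection $\mathcal C=\{C_1,\dots,C_n\}$, where each set weight $w_i$ is drawn independently from a distribution with density $f_i:[0,1]\to[0,\phi]$. Then the expected maximum number of iterations of local search (over all initial feasible solutions and all improving sequences) is $O(3^kn^{k+2}\phi)$, with an absolute hidden constant.
   Context: X3C-$k$ (Exact Cover by 3-Sets): given a finite set $\mathcal B$ with $|\mathcal B|=3q$ and a collection $\mathcal C=\{C_1,\dots,C_n\}$ of 3-element subsets of $\mathcal B$ with weights $w_i$, a feasible solution is $S\subseteq\mathcal C$ with $|S|=q$ and $\bigcup_{C_i\in S}C_i=\mathcal B$; its weight $\sum_{C_i\in S}w_i$ is to be maximized; neighbours of $S$ are exact covers obtained by adding or removing at most $k$ sets in total. SC-$k$ (Set Cover): given a collection $\mathcal C=\{C_1,\dots,C_n\}$ of subsets of $\mathcal B$ with weights $w_i$, a feasible solution is $S\subseteq\mathcal C$ with $\bigcup_{C_i\in S}C_i=\mathcal B$; its cost $\sum_{C_i\in S}w_i$ is to be minimized; neighbours are covers obtained by changing membership of at most $k$ sets. A solution is a feasible solution with no strictly better neighbour; local search repeatedly moves to a strictly better neighbour. *)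

theory Defs
  imports "HOL-Probability.Probability"
begin

text \<open>Solutions are represented as sets of indices S \<subseteq> {..<n} into the collection C.\<close>

definition symdiff :: "'a set \<Rightarrow> 'a set \<Rightarrow> 'a set" where
  "symdiff A B = (A - B) \<union> (B - A)"

definition improving_seq ::
  "(nat set \<Rightarrow> bool) \<Rightarrow> (nat set \<Rightarrow> nat set \<Rightarrow> bool) \<Rightarrow> nat \<Rightarrow> nat set list \<Rightarrow> bool" where
  "improving_seq feas better k xs \<longleftrightarrow>
     xs \<noteq> [] \<and> (\<forall>S\<in>set xs. feas S) \<and>
     (\<forall>i. Suc i < length xs \<longrightarrow>
        card (symdiff (xs ! i) (xs ! Suc i)) \<le> k \<and> better (xs ! Suc i) (xs ! i))"

definition max_iterations ::
  "(nat set \<Rightarrow> bool) \<Rightarrow> (nat set \<Rightarrow> nat set \<Rightarrow> bool) \<Rightarrow> nat \<Rightarrow> ennreal" where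
  "max_iterations feas better k =
     (SUP xs \<in> Collect (improving_seq feas better k). of_nat (length xs - 1))"

definition x3c_feasible :: "'a set \<Rightarrow> (nat \<Rightarrow> 'a set) \<Rightarrow> nat \<Rightarrow> nat \<Rightarrow> nat set \<Rightarrow> bool" where
  "x3c_feasible B C n q S \<longleftrightarrow> S \<subseteq> {..<n} \<and> card S = q \<and> (\<Union>i\<in>S. C i) = B"

definition x3c_better :: "(nat \<Rightarrow> real) \<Rightarrow> nat set \<Rightarrow> nat set \<Rightarrow> bool" where
  "x3c_better w T S \<longleftrightarrow> sum w T > sum w S"

definition sc_feasible :: "'a set \<Rightarrow> (nat \<Rightarrow> 'a set) \<Rightarrow> nat \<Rightarrow> nat set \<Rightarrow> bool" where
  "sc_feasible B C n S \<longleftrightarrow> S \<subseteq> {..<n} \<and> (\<Union>i\<in>S. C i) = B"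

definition sc_better :: "(nat \<Rightarrow> real) \<Rightarrow> nat set \<Rightarrow> nat set \<Rightarrow> bool" where
  "sc_better w T S \<longleftrightarrow> sum w T < sum w S"

definition bounded_density :: "real \<Rightarrow> (real \<Rightarrow> real) \<Rightarrow> bool" where
  "bounded_density \<phi> g \<longleftrightarrow> g \<in> borel_measurable borel \<and>
     (\<forall>x. 0 \<le> g x \<and> g x \<le> \<phi>) \<and> (\<forall>x. x \<notin> {0..1} \<longrightarrow> g x = 0) \<and>
     (\<integral>\<^sup>+ x. ennreal (g x) \<partial>lborel) = 1"

definition smoothed_weights :: "nat \<Rightarrow> (nat \<Rightarrow> real \<Rightarrow> real) \<Rightarrow> (nat \<Rightarrow> real) measure" where
  "smoothed_weights n f = (\<Pi>\<^sub>M i\<in>{..<n}. density lborel (\<lambda>x. ennreal (f i x)))"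

end

theory Submission
  imports Defs
begin

(*
  A run of local search never revisits a solution, so it has fewer than 2^n steps; and since
  the objective ranges over an interval of length n when the weights lie in [0,1], a run has
  at most n/\<epsilon> steps if every improving move gains more than \<epsilon>. The gain of a move is
  w(P) - w(Q) for one of at most (2n+1)^k exchanges (P, Q) with |P| + |Q| \<le> k. Conditioning on
  all weights but one coordinate of the symmetric difference of P and Q shows that this gain
  lies in (0, \<epsilon>] with probability at most \<phi>\<epsilon>. A union bound over the exchanges and over the
  dyadic scales \<epsilon> = 2^-j, j = 1..n, bounds the expected number of steps by
  2n + 2n^2 (2n+1)^k \<phi> \<le> 4 3^k n^(k+2) \<phi>.
*)

lemma sum_fun_upd:
  "finite A \<Longrightarrow> sum (f(i := y)) A = (if i \<in> A then y + sum f (A - {i}) else sum f A)"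
  by (auto simp: sum.remove intro!: sum.cong)

lemma sum_diff_eq_sum_Diff:
  fixes w :: "'a \<Rightarrow> real"
  assumes "finite S" "finite T"
  shows "sum w T - sum w S = sum w (T - S) - sum w (S - T)"
  using assms sum.Int_Diff[of T w S] sum.Int_Diff[of S w T] by (simp add: Int_commute)

lemma card_subsets_card_le:
  assumes "finite X"
  shows "card {A. A \<subseteq> X \<and> card A \<le> k} \<le> (card X + 1) ^ k"
proof -
  define S where "S k = {A. A \<subseteq> X \<and> card A \<le> k}" for k
  have fin: "finite (S k)" for k
    unfolding S_def by (rule finite_subset[of _ "Pow X"]) (use assms in auto)
  have "card (S k) \<le> (card X + 1) ^ k"
  proof (induction k)
    case 0
    have "S 0 \<subseteq> {{}}"
      using assms unfolding S_def by (auto simp: card_eq_0_iff dest: finite_subset)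
    then show ?case
      using card_mono[of "{{}}" "S 0"] by simp
  next
    case (Suc k)
    let ?insert = "(\<lambda>(x, B). insert x B) ` (X \<times> S k)"
    have "S (Suc k) \<subseteq> S k \<union> ?insert"
    proof
      fix A assume A: "A \<in> S (Suc k)"
      show "A \<in> S k \<union> ?insert"
      proof (cases "card A \<le> k")
        case False
        then obtain x where x: "x \<in> A"
          by (metis card.empty equals0I le0)
        have "finite A"
          using A assms finite_subset unfolding S_def by blast
        then have "(x, A - {x}) \<in> X \<times> S k"
          using A x unfolding S_def by auto
        moreover have "A = (\<lambda>(x, B). insert x B) (x, A - {x})"
          using x by auto
        ultimately show ?thesis
          by (intro UnI2 image_eqI)
      qed (use A in \<open>simp add: S_def\<close>)
    qed
    then have "card (S (Suc k)) \<le> card (S k \<union> ?insert)"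
      using fin assms by (simp add: card_mono)
    also have "\<dots> \<le> card (S k) + card ?insert"
      by (rule card_Un_le)
    also have "\<dots> \<le> card (S k) + card X * card (S k)"
      using card_image_le[of "X \<times> S k"] fin assms by (simp add: card_cartesian_product)
    also have "\<dots> \<le> (card X + 1) ^ Suc k"
      using mult_le_mono2[OF Suc.IH, of "card X + 1"] by (simp add: algebra_simps)
    finally show ?case .
  qed
  then show ?thesis
    unfolding S_def .
qed

lemma distinct_if_successively_less:
  fixes h :: "'a \<Rightarrow> 'b::linorder"
  assumes "successively (\<lambda>x y. h x < h y) xs"
  shows "distinct xs"
proof -
  have "sorted_wrt (\<lambda>x y. h x < h y) xs"
    using assms by (subst successively_conv_sorted_wrt[symmetric]) (auto simp: transp_def)
  then have "sorted_wrt (<) (map h xs)"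
    by (simp add: sorted_wrt_map)
  then have "distinct (map h xs)"
    by (simp add: strict_sorted_iff)
  then show ?thesis
    by (simp add: distinct_map)
qed

lemma successively_increment_sum:
  fixes h :: "'a \<Rightarrow> real"
  assumes "successively (\<lambda>S T. h S + \<epsilon> \<le> h T) xs" "xs \<noteq> []"
  shows "real (length xs - 1) * \<epsilon> \<le> h (last xs) - h (hd xs)"
  using assms by (induction xs rule: induct_list012) (auto simp: algebra_simps)

lemma dyadic_count_le:
  fixes m n :: nat
  assumes m: "m < 2 ^ n" and steps: "\<And>\<epsilon>. 0 < \<epsilon> \<Longrightarrow> \<not> Bd \<epsilon> \<Longrightarrow> real m * \<epsilon> \<le> real n"
  shows "real m \<le> 2 * real n + (\<Sum>j\<in>{1..n}. real n * 2 ^ (j + 1) * of_bool (Bd (1 / 2 ^ j)))"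
    (is "_ \<le> _ + ?sum")
proof -
  \<comment> \<open>Take the largest \<open>j\<close> with \<open>Bd (1 / 2 ^ j)\<close>, or \<open>j = 0\<close> (whose summand is \<open>2 * n\<close>): its summand
    pays for the at most \<open>n * 2 ^ (j + 1)\<close> steps allowed by \<open>\<not> Bd (1 / 2 ^ (j + 1))\<close>, or by
    \<open>m < 2 ^ n\<close> when \<open>j = n\<close>.\<close>
  define J where "J = {j \<in> {1..n}. Bd (1 / 2 ^ j)}"
  define j where "j = Max (insert 0 J)"
  have "finite J"
    unfolding J_def by auto
  then have j: "j \<in> insert 0 J" "\<And>i. i \<in> J \<Longrightarrow> i \<le> j"
    unfolding j_def using Max_in[of "insert 0 J"] by auto
  have "real n * 2 ^ (j + 1) \<le> 2 * real n + ?sum"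
  proof (cases "j = 0")
    case True
    moreover have "0 \<le> ?sum"
      by (intro sum_nonneg) auto
    ultimately show ?thesis
      by simp
  next
    case False
    then have "j \<in> {1..n}" "Bd (1 / 2 ^ j)"
      using j(1) unfolding J_def by auto
    then have "real n * 2 ^ (j + 1) * of_bool (Bd (1 / 2 ^ j)) \<le> ?sum"
      by (intro member_le_sum) auto
    with \<open>Bd (1 / 2 ^ j)\<close> show ?thesis
      by simp
  qed
  moreover have "real m \<le> real n * 2 ^ (j + 1)"
  proof (cases "j < n")
    case True
    then have "j + 1 \<in> {1..n} - J"
      using j(2)[of "j + 1"] by auto
    then have "real m * (1 / 2 ^ (j + 1)) \<le> real n"
      unfolding J_def by (intro steps) auto
    then show ?thesis
      by (simp add: field_simps)
  next
    case False
    then have "j = n"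
      using j unfolding J_def by auto
    have "m \<le> n * 2 ^ (n + 1)"
    proof (cases n)
      case (Suc n')
      then have "2 ^ n \<le> n * 2 ^ (n + 1)"
        by simp
      with m show ?thesis
        by linarith
    qed (use m in simp)
    then show ?thesis
      unfolding \<open>j = n\<close> using of_nat_le_iff[of m "n * 2 ^ (n + 1)", where 'a = real] by simp
  qed
  ultimately show ?thesis
    by linarith
qed

lemma nn_integral_of_bool_combination_le:
  fixes c p :: "'j \<Rightarrow> real"
  assumes M: "prob_space M" and J: "finite J" and a: "0 \<le> a"
    and c: "\<And>j. j \<in> J \<Longrightarrow> 0 \<le> c j" and p: "\<And>j. j \<in> J \<Longrightarrow> 0 \<le> p j"
    and events: "\<And>j. j \<in> J \<Longrightarrow> {x \<in> space M. P j x} \<in> sets M"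
    and prob: "\<And>j. j \<in> J \<Longrightarrow> emeasure M {x \<in> space M. P j x} \<le> ennreal (p j)"
  shows "(\<integral>\<^sup>+ x. ennreal (a + (\<Sum>j\<in>J. c j * of_bool (P j x))) \<partial>M) \<le> ennreal (a + (\<Sum>j\<in>J. c j * p j))"
proof -
  have "(\<integral>\<^sup>+ x. ennreal (a + (\<Sum>j\<in>J. c j * of_bool (P j x))) \<partial>M)
      = (\<integral>\<^sup>+ x. ennreal a + (\<Sum>j\<in>J. ennreal (c j) * indicator {x \<in> space M. P j x} x) \<partial>M)"
    using a c by (intro nn_integral_cong)
      (auto simp: ennreal_plus sum_nonneg sum_ennreal[symmetric] ennreal_mult intro!: sum.cong split: split_indicator)
  also have "\<dots> = ennreal a + (\<Sum>j\<in>J. ennreal (c j) * emeasure M {x \<in> space M. P j x})"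
    using events prob_space.emeasure_space_1[OF M]
    by (simp add: nn_integral_add nn_integral_sum nn_integral_cmult_indicator)
  also have "\<dots> \<le> ennreal a + (\<Sum>j\<in>J. ennreal (c j) * ennreal (p j))"
    using prob by (intro add_left_mono sum_mono mult_left_mono) auto
  also have "\<dots> = ennreal (a + (\<Sum>j\<in>J. c j * p j))"
  proof -
    have "(\<Sum>j\<in>J. ennreal (c j) * ennreal (p j)) = ennreal (\<Sum>j\<in>J. c j * p j)"
      using c p by (subst sum_ennreal[symmetric]) (auto simp: ennreal_mult intro!: sum.cong)
    then show ?thesis
      using a c p by (simp add: ennreal_plus sum_nonneg)
  qed
  finally show ?thesis .
qed

lemma sets_PiM_sum_difference_interval:
  fixes M :: "'i \<Rightarrow> real measure"
  assumes borel: "\<And>i. i \<in> I \<Longrightarrow> sets (M i) = sets borel" and PQ: "P \<subseteq> I" "Q \<subseteq> I"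
  shows "{w \<in> space (PiM I M). 0 < sum w P - sum w Q \<and> sum w P - sum w Q \<le> \<epsilon>} \<in> sets (PiM I M)"
proof -
  have component: "(\<lambda>w. w i) \<in> borel_measurable (PiM I M)" if "i \<in> I" for i
    using that borel by (intro measurable_PiM_component_rev[where f="\<lambda>x. x"]) (auto cong: measurable_cong_sets)
  have "(\<lambda>w. sum w A) \<in> borel_measurable (PiM I M)" if "A \<subseteq> I" for A
    by (rule borel_measurable_sum) (use that component in blast)
  from this[OF PQ(1)] this[OF PQ(2)] show ?thesis by measurable
qed

lemma sum_difference_fun_upd_interval:
  fixes x :: "'i \<Rightarrow> real"
  assumes fin: "finite P" "finite Q" and i: "i \<in> symdiff P Q"
  obtains a where "\<And>y. 0 < sum (x(i := y)) P - sum (x(i := y)) Q \<Longrightarrow>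
    sum (x(i := y)) P - sum (x(i := y)) Q \<le> \<epsilon> \<Longrightarrow> y \<in> {a..a+\<epsilon>}"
proof -
  define c where "c = sum x (P - {i}) - sum x (Q - {i})"
  have "A - {i} = A" if "i \<notin> A" for A :: "'i set"
    using that by blast
  then have gain: "sum (x(i := y)) P - sum (x(i := y)) Q = (if i \<in> P then y else - y) + c" for y
    using i unfolding symdiff_def c_def sum_fun_upd[OF fin(1)] sum_fun_upd[OF fin(2)] by auto
  show thesis
    by (rule that[of "if i \<in> P then - c else c - \<epsilon>"]) (unfold gain, auto split: if_splits)
qed

lemma emeasure_PiM_sum_difference_interval_le:
  fixes M :: "'i \<Rightarrow> real measure" and \<delta> :: ennreal
  assumes prob: "\<And>i. prob_space (M i)" and borel: "\<And>i. i \<in> I \<Longrightarrow> sets (M i) = sets borel"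
    and fin: "finite I" and PQ: "P \<subseteq> I" "Q \<subseteq> I" "P \<noteq> Q"
    and interval: "\<And>i a. i \<in> I \<Longrightarrow> emeasure (M i) {a..a+\<epsilon>} \<le> \<delta>"
  shows "emeasure (PiM I M) {w \<in> space (PiM I M). 0 < sum w P - sum w Q \<and> sum w P - sum w Q \<le> \<epsilon>} \<le> \<delta>"
    (is "emeasure _ ?E \<le> _")
proof -
  interpret prob_space "M i" for i
    by (rule prob)
  interpret product_prob_space M I
    by unfold_locales
  from PQ obtain i where i: "i \<in> symdiff P Q"
    unfolding symdiff_def by blast
  define J where "J = I - {i}"
  have I: "I = insert i J" "finite J" "i \<notin> J"
    using i PQ fin unfolding J_def symdiff_def by auto
  have finPQ: "finite P" "finite Q"
    using PQ fin finite_subset by auto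
  have E: "?E \<in> sets (PiM I M)"
    by (rule sets_PiM_sum_difference_interval[OF borel PQ(1,2)])
  have "emeasure (PiM I M) ?E = (\<integral>\<^sup>+ w. indicator ?E w \<partial>PiM I M)"
    using E by simp
  also have "\<dots> = (\<integral>\<^sup>+ x. (\<integral>\<^sup>+ y. indicator ?E (x(i := y)) \<partial>M i) \<partial>PiM J M)"
    using E unfolding I(1) by (intro product_nn_integral_insert[OF I(2,3)]) simp
  also have "\<dots> \<le> (\<integral>\<^sup>+ x. \<delta> \<partial>PiM J M)"
  proof (rule nn_integral_mono)
    fix x :: "'i \<Rightarrow> real"
    obtain a where a: "\<And>y. 0 < sum (x(i := y)) P - sum (x(i := y)) Q \<Longrightarrow>
        sum (x(i := y)) P - sum (x(i := y)) Q \<le> \<epsilon> \<Longrightarrow> y \<in> {a..a+\<epsilon>}"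
      using sum_difference_fun_upd_interval[OF finPQ i, where x = x and \<epsilon> = \<epsilon>] by blast
    have "indicator ?E (x(i := y)) \<le> (indicator {a..a+\<epsilon>} y :: ennreal)" for y
    proof (cases "x(i := y) \<in> ?E")
      case True
      then have "0 < sum (x(i := y)) P - sum (x(i := y)) Q" "sum (x(i := y)) P - sum (x(i := y)) Q \<le> \<epsilon>"
        by blast+
      then have "y \<in> {a..a+\<epsilon>}"
        by (rule a)
      then show ?thesis
        by (simp add: indicator_def)
    qed simp
    then have "(\<integral>\<^sup>+ y. indicator ?E (x(i := y)) \<partial>M i) \<le> (\<integral>\<^sup>+ y. indicator {a..a+\<epsilon>} y \<partial>M i)"
      by (rule nn_integral_mono)
    also have "\<dots> = emeasure (M i) {a..a+\<epsilon>}"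
      using borel I by (intro nn_integral_indicator) auto
    also have "\<dots> \<le> \<delta>"
      using interval I by simp
    finally show "(\<integral>\<^sup>+ y. indicator ?E (x(i := y)) \<partial>M i) \<le> \<delta>" .
  qed
  also have "\<dots> = \<delta>"
    using prob_space_PiM[of J M] prob by (simp add: prob_space.emeasure_space_1)
  finally show ?thesis .
qed

lemma bounded_density_measurable:
  "bounded_density \<phi> g \<Longrightarrow> (\<lambda>x. ennreal (g x)) \<in> borel_measurable lborel"
  unfolding bounded_density_def by (simp add: measurable_lborel1)

lemma prob_space_bounded_density:
  assumes "bounded_density \<phi> g"
  shows "prob_space (density lborel (\<lambda>x. ennreal (g x)))"
proof (rule prob_spaceI)
  show "emeasure (density lborel (\<lambda>x. ennreal (g x))) (space (density lborel (\<lambda>x. ennreal (g x)))) = 1"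
    using assms bounded_density_measurable[OF assms]
    by (simp add: emeasure_density bounded_density_def)
qed

lemma emeasure_bounded_density_le:
  assumes "bounded_density \<phi> g" and "A \<in> sets borel"
  shows "emeasure (density lborel (\<lambda>x. ennreal (g x))) A \<le> ennreal \<phi> * emeasure lborel (A \<inter> {0..1})"
proof -
  have "emeasure (density lborel (\<lambda>x. ennreal (g x))) A = (\<integral>\<^sup>+ x. ennreal (g x) * indicator A x \<partial>lborel)"
    using assms bounded_density_measurable[OF assms(1)] by (simp add: emeasure_density)
  also have "\<dots> \<le> (\<integral>\<^sup>+ x. ennreal \<phi> * indicator (A \<inter> {0..1}) x \<partial>lborel)"
    using assms(1) unfolding bounded_density_def
    by (intro nn_integral_mono) (auto split: split_indicator intro: ennreal_leI)
  also have "\<dots> = ennreal \<phi> * emeasure lborel (A \<inter> {0..1})"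
    using assms(2) by (simp add: nn_integral_cmult_indicator)
  finally show ?thesis .
qed

lemma bounded_density_ge_1:
  assumes "bounded_density \<phi> g"
  shows "1 \<le> \<phi>"
proof -
  have "1 = emeasure (density lborel (\<lambda>x. ennreal (g x))) UNIV"
    using prob_space.emeasure_space_1[OF prob_space_bounded_density[OF assms]] by simp
  also have "\<dots> \<le> ennreal \<phi>"
    using emeasure_bounded_density_le[OF assms, of UNIV] by simp
  finally show ?thesis
    by (cases "0 \<le> \<phi>") (auto simp: ennreal_neg)
qed

lemma emeasure_bounded_density_interval_le:
  assumes "bounded_density \<phi> g" and "0 \<le> \<epsilon>"
  shows "emeasure (density lborel (\<lambda>x. ennreal (g x))) {a..a+\<epsilon>} \<le> ennreal (\<phi> * \<epsilon>)"
proof -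
  have "emeasure (density lborel (\<lambda>x. ennreal (g x))) {a..a+\<epsilon>}
      \<le> ennreal \<phi> * emeasure lborel ({a..a+\<epsilon>} \<inter> {0..1})"
    by (rule emeasure_bounded_density_le[OF assms(1)]) simp
  also have "\<dots> \<le> ennreal \<phi> * emeasure lborel {a..a+\<epsilon>}"
    by (intro mult_left_mono emeasure_mono) auto
  also have "\<dots> = ennreal (\<phi> * \<epsilon>)"
    using assms(2) bounded_density_ge_1[OF assms(1)] by (simp add: ennreal_mult)
  finally show ?thesis .
qed

text \<open>Coordinates outside \<open>{..<n}\<close> are padded with a point mass, so that every factor is a
  probability measure on the Borel sets, as the product-measure lemmas require.\<close>

definition weight_marginal :: "nat \<Rightarrow> (nat \<Rightarrow> real \<Rightarrow> real) \<Rightarrow> nat \<Rightarrow> real measure" where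
  "weight_marginal n f i = (if i < n then density lborel (\<lambda>x. ennreal (f i x)) else return borel 0)"

lemma smoothed_weights_eq_PiM: "smoothed_weights n f = PiM {..<n} (weight_marginal n f)"
  unfolding smoothed_weights_def weight_marginal_def by (intro PiM_cong) auto

lemma sets_weight_marginal: "sets (weight_marginal n f i) = sets borel"
  by (simp add: weight_marginal_def)

lemma prob_space_weight_marginal:
  "\<forall>i<n. bounded_density \<phi> (f i) \<Longrightarrow> prob_space (weight_marginal n f i)"
  by (auto simp: weight_marginal_def intro: prob_space_bounded_density prob_space_return)

lemma prob_space_smoothed_weights:
  "\<forall>i<n. bounded_density \<phi> (f i) \<Longrightarrow> prob_space (smoothed_weights n f)"
  unfolding smoothed_weights_eq_PiM by (intro prob_space_PiM prob_space_weight_marginal)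

lemma AE_smoothed_weights_unit_interval:
  assumes bd: "\<forall>i<n. bounded_density \<phi> (f i)"
  shows "AE w in smoothed_weights n f. \<forall>i<n. w i \<in> {0..1}"
proof -
  have "AE x in weight_marginal n f i. x \<in> {0..1}" if i: "i < n" for i
  proof -
    have "\<forall>x. 0 < f i x \<longrightarrow> x \<in> {0..1}"
      using bd i unfolding bounded_density_def by (metis less_irrefl)
    then have "AE x in density lborel (\<lambda>x. ennreal (f i x)). x \<in> {0..1}"
      using bounded_density_measurable[of \<phi> "f i"] bd i
      by (subst AE_density) (auto intro!: AE_I2)
    then show ?thesis
      using i unfolding weight_marginal_def by simp
  qed
  then have "AE w in smoothed_weights n f. \<forall>i\<in>{..<n}. w i \<in> {0..1}"
    unfolding smoothed_weights_eq_PiM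
    using prob_space_weight_marginal[OF bd] by (intro AE_finite_allI AE_PiM_component) auto
  then show ?thesis
    by (rule eventually_mono) auto
qed

definition exchanges :: "nat \<Rightarrow> nat \<Rightarrow> (nat set \<times> nat set) set" where
  "exchanges n k = {(P, Q). P \<subseteq> {..<n} \<and> Q \<subseteq> {..<n} \<and> card P + card Q \<le> k}"

lemma finite_exchanges: "finite (exchanges n k)"
  by (rule finite_subset[of _ "Pow {..<n} \<times> Pow {..<n}"]) (auto simp: exchanges_def)

lemma card_exchanges_le: "card (exchanges n k) \<le> (2 * n + 1) ^ k"
proof -
  let ?X = "{..<n} \<times> (UNIV :: bool set)"
  let ?split = "\<lambda>A. ({i. (i, True) \<in> A}, {i. (i, False) \<in> A})"
  have "exchanges n k \<subseteq> ?split ` {A. A \<subseteq> ?X \<and> card A \<le> k}"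
  proof
    fix PQ assume "PQ \<in> exchanges n k"
    then obtain P Q where PQ: "PQ = (P, Q)" "P \<subseteq> {..<n}" "Q \<subseteq> {..<n}" "card P + card Q \<le> k"
      unfolding exchanges_def by blast
    then have "finite P" "finite Q"
      using finite_subset by auto
    then have "card (P \<times> {True} \<union> Q \<times> {False}) = card P + card Q"
      by (subst card_Un_disjoint) (auto simp: card_cartesian_product)
    then show "PQ \<in> ?split ` {A. A \<subseteq> ?X \<and> card A \<le> k}"
      using PQ by (intro image_eqI[of _ _ "P \<times> {True} \<union> Q \<times> {False}"]) auto
  qed
  then have "card (exchanges n k) \<le> card (?split ` {A. A \<subseteq> ?X \<and> card A \<le> k})"
    by (simp add: card_mono)
  also have "\<dots> \<le> card {A. A \<subseteq> ?X \<and> card A \<le> k}"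
    by (rule card_image_le) (simp add: finite_subset[of _ "Pow ?X"])
  also have "\<dots> \<le> (2 * n + 1) ^ k"
    using card_subsets_card_le[of ?X k] by (simp add: card_cartesian_product mult.commute)
  finally show ?thesis .
qed

lemma exchange_if_neighbour:
  assumes "S \<subseteq> {..<n}" "T \<subseteq> {..<n}" "card (symdiff S T) \<le> k"
  shows "(T - S, S - T) \<in> exchanges n k"
proof -
  have "finite S" "finite T"
    using assms finite_subset by auto
  then have "card (symdiff S T) = card (S - T) + card (T - S)"
    unfolding symdiff_def by (intro card_Un_disjoint) auto
  then show ?thesis
    using assms unfolding exchanges_def by auto
qed

definition small_improvement :: "nat \<Rightarrow> nat \<Rightarrow> real \<Rightarrow> (nat \<Rightarrow> real) \<Rightarrow> bool" where
  "small_improvement n k \<epsilon> w \<longleftrightarrow>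
     (\<exists>(P, Q)\<in>exchanges n k. 0 < sum w P - sum w Q \<and> sum w P - sum w Q \<le> \<epsilon>)"

lemma small_improvement_event_eq:
  "{w \<in> space M. small_improvement n k \<epsilon> w}
     = (\<Union>(P, Q)\<in>exchanges n k. {w \<in> space M. 0 < sum w P - sum w Q \<and> sum w P - sum w Q \<le> \<epsilon>})"
  unfolding small_improvement_def by auto

lemma sets_exchange_gain:
  "PQ \<in> exchanges n k \<Longrightarrow> (case PQ of (P, Q) \<Rightarrow>
     {w \<in> space (smoothed_weights n f). 0 < sum w P - sum w Q \<and> sum w P - sum w Q \<le> \<epsilon>})
       \<in> sets (smoothed_weights n f)"
  unfolding smoothed_weights_eq_PiM exchanges_def
  by (auto intro!: sets_PiM_sum_difference_interval sets_weight_marginal simp del: diff_gt_0_iff_gt)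

lemma sets_small_improvement:
  "{w \<in> space (smoothed_weights n f). small_improvement n k \<epsilon> w} \<in> sets (smoothed_weights n f)"
  unfolding small_improvement_event_eq
  using finite_exchanges sets_exchange_gain by (intro sets.finite_UN) auto

lemma emeasure_small_improvement_le:
  assumes bd: "\<forall>i<n. bounded_density \<phi> (f i)" and "0 \<le> \<epsilon>"
  shows "emeasure (smoothed_weights n f) {w \<in> space (smoothed_weights n f). small_improvement n k \<epsilon> w}
           \<le> ennreal ((2 * real n + 1) ^ k * (\<phi> * \<epsilon>))"
proof -
  let ?M = "smoothed_weights n f"
  let ?E = "\<lambda>(P, Q). {w \<in> space ?M. 0 < sum w P - sum w Q \<and> sum w P - sum w Q \<le> \<epsilon>}"
  have "emeasure ?M (\<Union>PQ\<in>exchanges n k. ?E PQ) \<le> (\<Sum>PQ\<in>exchanges n k. emeasure ?M (?E PQ))"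
    using finite_exchanges sets_exchange_gain by (intro emeasure_subadditive_finite) auto
  also have "\<dots> \<le> (\<Sum>PQ\<in>exchanges n k. ennreal (\<phi> * \<epsilon>))"
  proof (intro sum_mono)
    fix PQ assume "PQ \<in> exchanges n k"
    then obtain P Q where PQ: "PQ = (P, Q)" "P \<subseteq> {..<n}" "Q \<subseteq> {..<n}"
      unfolding exchanges_def by blast
    show "emeasure ?M (?E PQ) \<le> ennreal (\<phi> * \<epsilon>)"
    proof (cases "P = Q")
      case False
      show ?thesis
        unfolding PQ(1) prod.case smoothed_weights_eq_PiM
        using PQ(2,3) False prob_space_weight_marginal[OF bd] sets_weight_marginal
          emeasure_bounded_density_interval_le[OF _ assms(2)] bd
        by (intro emeasure_PiM_sum_difference_interval_le) (auto simp: weight_marginal_def)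
    qed (simp add: PQ(1))
  qed
  also have "\<dots> = of_nat (card (exchanges n k)) * ennreal (\<phi> * \<epsilon>)"
    by simp
  also have "\<dots> \<le> of_nat ((2 * n + 1) ^ k) * ennreal (\<phi> * \<epsilon>)"
    by (intro mult_right_mono of_nat_mono card_exchanges_le) simp
  also have "\<dots> = ennreal ((2 * real n + 1) ^ k * (\<phi> * \<epsilon>))"
    by (simp add: ennreal_of_nat_eq_real_of_nat ennreal_mult' add.commute)
  finally show ?thesis
    unfolding small_improvement_event_eq .
qed

definition iteration_bound :: "nat \<Rightarrow> nat \<Rightarrow> (nat \<Rightarrow> real) \<Rightarrow> real" where
  "iteration_bound n k w =
     2 * real n + (\<Sum>j\<in>{1..n}. real n * 2 ^ (j + 1) * of_bool (small_improvement n k (1 / 2 ^ j) w))"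

lemma length_improving_seq_le:
  fixes h :: "nat set \<Rightarrow> real"
  assumes xs: "improving_seq feas better k xs"
    and feas: "\<And>S. feas S \<Longrightarrow> S \<subseteq> {..<n}"
    and better: "\<And>S T. better T S \<longleftrightarrow> h S < h T"
  shows "length xs \<le> 2 ^ n"
proof -
  have "successively (\<lambda>S T. h S < h T) xs"
    using xs better unfolding improving_seq_def successively_conv_nth by blast
  then have "distinct xs"
    by (rule distinct_if_successively_less)
  then have "length xs = card (set xs)"
    by (simp add: distinct_card)
  also have "\<dots> \<le> card (Pow {..<n :: nat})"
    using xs feas unfolding improving_seq_def by (intro card_mono) auto
  finally show ?thesis
    by (simp add: card_Pow)
qed

lemma improving_seq_steps_le:
  fixes h :: "nat set \<Rightarrow> real"
  assumes xs: "improving_seq feas better k xs"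
    and feas: "\<And>S. feas S \<Longrightarrow> S \<subseteq> {..<n}"
    and better: "\<And>S T. better T S \<longleftrightarrow> h S < h T"
    and gain: "\<And>S T. S \<subseteq> {..<n} \<Longrightarrow> T \<subseteq> {..<n} \<Longrightarrow> card (symdiff S T) \<le> k \<Longrightarrow>
                 \<exists>(P, Q)\<in>exchanges n k. h T - h S = sum w P - sum w Q"
    and range: "\<And>S T. S \<subseteq> {..<n} \<Longrightarrow> T \<subseteq> {..<n} \<Longrightarrow> h T - h S \<le> real n"
    and "0 < \<epsilon>" and no_small: "\<not> small_improvement n k \<epsilon> w"
  shows "real (length xs - 1) * \<epsilon> \<le> real n"
proof -
  have nonempty: "xs \<noteq> []" and sub: "set xs \<subseteq> Pow {..<n}"
    using xs feas unfolding improving_seq_def by auto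
  have "h (xs ! i) + \<epsilon> \<le> h (xs ! Suc i)" if i: "Suc i < length xs" for i
  proof -
    have step: "card (symdiff (xs ! i) (xs ! Suc i)) \<le> k" "h (xs ! i) < h (xs ! Suc i)"
      using xs better i unfolding improving_seq_def by auto
    have "xs ! i \<in> set xs" "xs ! Suc i \<in> set xs"
      using i by auto
    then have "xs ! i \<subseteq> {..<n}" "xs ! Suc i \<subseteq> {..<n}"
      using sub by auto
    then obtain P Q where "(P, Q) \<in> exchanges n k" "h (xs ! Suc i) - h (xs ! i) = sum w P - sum w Q"
      using gain step(1) by blast
    then show ?thesis
      using step(2) no_small unfolding small_improvement_def by force
  qed
  then have "real (length xs - 1) * \<epsilon> \<le> h (last xs) - h (hd xs)"
    using nonempty by (intro successively_increment_sum) (simp_all add: successively_conv_nth)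
  also have "\<dots> \<le> real n"
    using sub hd_in_set[OF nonempty] last_in_set[OF nonempty] by (auto intro!: range)
  finally show ?thesis .
qed

lemma max_iterations_le_iteration_bound:
  fixes h :: "nat set \<Rightarrow> real"
  assumes feas: "\<And>S. feas S \<Longrightarrow> S \<subseteq> {..<n}"
    and better: "\<And>S T. better T S \<longleftrightarrow> h S < h T"
    and gain: "\<And>S T. S \<subseteq> {..<n} \<Longrightarrow> T \<subseteq> {..<n} \<Longrightarrow> card (symdiff S T) \<le> k \<Longrightarrow>
                 \<exists>(P, Q)\<in>exchanges n k. h T - h S = sum w P - sum w Q"
    and range: "\<And>S T. S \<subseteq> {..<n} \<Longrightarrow> T \<subseteq> {..<n} \<Longrightarrow> h T - h S \<le> real n"
  shows "max_iterations feas better k \<le> ennreal (iteration_bound n k w)"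
  unfolding max_iterations_def
proof (rule SUP_least)
  fix xs assume "xs \<in> Collect (improving_seq feas better k)"
  then have xs: "improving_seq feas better k xs"
    by simp
  then have "xs \<noteq> []"
    unfolding improving_seq_def by simp
  then have "length xs - 1 < 2 ^ n"
    using length_improving_seq_le[OF xs feas better] by (cases xs) auto
  then have "real (length xs - 1) \<le> iteration_bound n k w"
    unfolding iteration_bound_def
    using improving_seq_steps_le[OF xs feas better gain range] by (rule dyadic_count_le)
  then show "of_nat (length xs - 1) \<le> ennreal (iteration_bound n k w)"
    by (simp add: ennreal_of_nat_eq_real_of_nat ennreal_leI)
qed

lemma sum_unit_weights_diff_le:
  fixes w :: "nat \<Rightarrow> real"
  assumes w: "\<forall>i<n. w i \<in> {0..1}" and "S \<subseteq> {..<n}" "T \<subseteq> {..<n}"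
  shows "sum w T - sum w S \<le> real n"
proof -
  have "0 \<le> sum w S"
    using assms by (intro sum_nonneg) auto
  moreover have "sum w T \<le> sum (\<lambda>_. 1) T"
    using assms by (intro sum_mono) auto
  moreover have "card T \<le> n"
    using card_mono[OF _ \<open>T \<subseteq> {..<n}\<close>] by simp
  ultimately show ?thesis
    by simp
qed

lemma max_iterations_x3c_le:
  assumes "\<forall>i<n. w i \<in> {0..1}"
  shows "max_iterations (x3c_feasible B C n q) (x3c_better w) k \<le> ennreal (iteration_bound n k w)"
proof (rule max_iterations_le_iteration_bound[where h = "\<lambda>S. sum w S"])
  fix S T assume ST: "S \<subseteq> {..<n}" "T \<subseteq> {..<n}"
  then show "sum w T - sum w S \<le> real n"
    using assms by (rule sum_unit_weights_diff_le[rotated])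
  assume "card (symdiff S T) \<le> k"
  then have "(T - S, S - T) \<in> exchanges n k"
    using ST by (intro exchange_if_neighbour)
  moreover have "sum w T - sum w S = sum w (T - S) - sum w (S - T)"
    using ST finite_subset by (intro sum_diff_eq_sum_Diff) auto
  ultimately show "\<exists>(P, Q)\<in>exchanges n k. sum w T - sum w S = sum w P - sum w Q"
    by blast
qed (auto simp: x3c_feasible_def x3c_better_def)

lemma max_iterations_sc_le:
  assumes "\<forall>i<n. w i \<in> {0..1}"
  shows "max_iterations (sc_feasible B C n) (sc_better w) k \<le> ennreal (iteration_bound n k w)"
proof (rule max_iterations_le_iteration_bound[where h = "\<lambda>S. - sum w S"])
  fix S T assume ST: "S \<subseteq> {..<n}" "T \<subseteq> {..<n}"
  then show "- sum w T - - sum w S \<le> real n"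
    using sum_unit_weights_diff_le[OF assms ST(2,1)] by simp
  assume "card (symdiff S T) \<le> k"
  then have "card (symdiff T S) \<le> k"
    by (simp add: symdiff_def Un_commute)
  then have "(S - T, T - S) \<in> exchanges n k"
    using ST by (intro exchange_if_neighbour)
  moreover have "- sum w T - - sum w S = sum w (S - T) - sum w (T - S)"
    using ST finite_subset sum_diff_eq_sum_Diff[of T S w] by auto
  ultimately show "\<exists>(P, Q)\<in>exchanges n k. - sum w T - - sum w S = sum w P - sum w Q"
    by blast
qed (auto simp: sc_feasible_def sc_better_def)

lemma iteration_bound_arith:
  assumes "1 \<le> n" "1 \<le> \<phi>"
  shows "2 * real n + real n * (2 * real n * (2 * real n + 1) ^ k * \<phi>) \<le> 4 * 3 ^ k * real n ^ (k + 2) * \<phi>"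
proof -
  have "real n \<le> real n ^ (k + 2)"
    using assms by (intro self_le_power) auto
  also have "\<dots> = 1 * real n ^ (k + 2) * 1"
    by simp
  also have "\<dots> \<le> 3 ^ k * real n ^ (k + 2) * \<phi>"
    using assms by (intro mult_mono) auto
  finally have "2 * real n \<le> 2 * (3 ^ k * real n ^ (k + 2) * \<phi>)"
    by simp
  moreover have "real n * (2 * real n * (2 * real n + 1) ^ k * \<phi>) \<le> 2 * (3 ^ k * real n ^ (k + 2) * \<phi>)"
  proof -
    have "(2 * real n + 1) ^ k \<le> (3 * real n) ^ k"
      using assms by (intro power_mono) auto
    then have "real n * (2 * real n * (2 * real n + 1) ^ k * \<phi>) \<le> real n * (2 * real n * (3 * real n) ^ k * \<phi>)"
      using assms by (intro mult_left_mono mult_right_mono) auto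
    then show ?thesis
      by (simp add: power_mult_distrib power_add power2_eq_square algebra_simps)
  qed
  ultimately show ?thesis
    by linarith
qed

lemma expected_iterations_le:
  assumes bd: "\<forall>i<n. bounded_density \<phi> (f i)"
    and F: "\<And>w. \<forall>i<n. w i \<in> {0..1} \<Longrightarrow> F w \<le> ennreal (iteration_bound n k w)"
  shows "(\<integral>\<^sup>+ w. F w \<partial>smoothed_weights n f) \<le> ennreal (4 * 3 ^ k * real n ^ (k + 2) * \<phi>)"
proof -
  have "(\<integral>\<^sup>+ w. F w \<partial>smoothed_weights n f) \<le> (\<integral>\<^sup>+ w. ennreal (iteration_bound n k w) \<partial>smoothed_weights n f)"
    using AE_smoothed_weights_unit_interval[OF bd] F by (intro nn_integral_mono_AE) auto
  also have "\<dots> \<le> ennreal (2 * real n + (\<Sum>j\<in>{1..n}. real n * 2 ^ (j + 1) * ((2 * real n + 1) ^ k * (\<phi> * (1 / 2 ^ j)))))"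
    unfolding iteration_bound_def
  proof (rule nn_integral_of_bool_combination_le[OF prob_space_smoothed_weights[OF bd]])
    fix j :: nat assume "j \<in> {1..n}"
    then have "1 \<le> \<phi>"
      using bd bounded_density_ge_1 by auto
    then show "0 \<le> (2 * real n + 1) ^ k * (\<phi> * (1 / 2 ^ j))"
      by simp
    show "emeasure (smoothed_weights n f) {w \<in> space (smoothed_weights n f). small_improvement n k (1 / 2 ^ j) w}
        \<le> ennreal ((2 * real n + 1) ^ k * (\<phi> * (1 / 2 ^ j)))"
      by (rule emeasure_small_improvement_le[OF bd]) simp
  qed (simp_all add: sets_small_improvement)
  also have "\<dots> \<le> ennreal (4 * 3 ^ k * real n ^ (k + 2) * \<phi>)"
  proof (cases "n = 0")
    case False
    have "(\<Sum>j\<in>{1..n}. real n * 2 ^ (j + 1) * ((2 * real n + 1) ^ k * (\<phi> * (1 / 2 ^ j))))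
        = real n * (2 * real n * (2 * real n + 1) ^ k * \<phi>)"
      by (simp add: power_add field_simps)
    moreover have "1 \<le> \<phi>"
      using False bd bounded_density_ge_1[of \<phi> "f 0"] by simp
    ultimately show ?thesis
      using False iteration_bound_arith[of n \<phi> k] by (intro ennreal_leI) simp
  qed simp
  finally show ?thesis .
qed

theorem mainTheorem15:
  shows "\<exists>c::real. c > 0 \<and>
    (\<forall>(B::nat set) (C::nat \<Rightarrow> nat set) n k q \<phi> f.
       finite B \<and> card B = 3 * q \<and> (\<forall>i<n. C i \<subseteq> B \<and> card (C i) = 3) \<and>
       (\<forall>i<n. bounded_density \<phi> (f i)) \<longrightarrow>
       (\<integral>\<^sup>+ w. max_iterations (x3c_feasible B C n q) (x3c_better w) k \<partial>smoothed_weights n f)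
         \<le> ennreal (c * 3 ^ k * real n ^ (k + 2) * \<phi>)) \<and>
    (\<forall>(B::nat set) (C::nat \<Rightarrow> nat set) n k \<phi> f.
       finite B \<and> (\<forall>i<n. C i \<subseteq> B) \<and>
       (\<forall>i<n. bounded_density \<phi> (f i)) \<longrightarrow>
       (\<integral>\<^sup>+ w. max_iterations (sc_feasible B C n) (sc_better w) k \<partial>smoothed_weights n f)
         \<le> ennreal (c * 3 ^ k * real n ^ (k + 2) * \<phi>))"
proof (intro exI[of _ 4] conjI allI impI)
  fix B :: "nat set" and C :: "nat \<Rightarrow> nat set" and n k q \<phi> and f :: "nat \<Rightarrow> real \<Rightarrow> real"
  assume "finite B \<and> card B = 3 * q \<and> (\<forall>i<n. C i \<subseteq> B \<and> card (C i) = 3) \<and>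
    (\<forall>i<n. bounded_density \<phi> (f i))"
  then show "(\<integral>\<^sup>+ w. max_iterations (x3c_feasible B C n q) (x3c_better w) k \<partial>smoothed_weights n f)
      \<le> ennreal (4 * 3 ^ k * real n ^ (k + 2) * \<phi>)"
    by (intro expected_iterations_le max_iterations_x3c_le) auto
next
  fix B :: "nat set" and C :: "nat \<Rightarrow> nat set" and n k \<phi> and f :: "nat \<Rightarrow> real \<Rightarrow> real"
  assume "finite B \<and> (\<forall>i<n. C i \<subseteq> B) \<and> (\<forall>i<n. bounded_density \<phi> (f i))"
  then show "(\<integral>\<^sup>+ w. max_iterations (sc_feasible B C n) (sc_better w) k \<partial>smoothed_weights n f)
      \<le> ennreal (4 * 3 ^ k * real n ^ (k + 2) * \<phi>)"
    by (intro expected_iterations_le max_iterations_sc_le) auto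
qed simp

end
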